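(* Let $N\ge 2$, let $D^N_1,\ldots,D^N_N$ satisfy (A1)–(A3) below, let lower-level demands $D^n_i$ be defined by the consistency recursion below and satisfy (A4), and let costs satisfy $0\le s_1\le s_2\le\cdots\le s_N$. Fix $n\in\{1,\ldots,N-1\}$ and prices $p_1,\ldots,p_{n-1}\ge 0$. If $D^n_n(p_1,\ldots,p_{n-1},s_n)\le 0$, then $D^{n+1}_{n+1}(p_1,\ldots,p_{n-1},s_n,s_{n+1})\le 0$.
   Context: (A1) Each $D_i^N:\mathbb{R}_+^N\to\mathbb{R}$ is smooth, $D_N^N(0,\ldots,0)>0$, $\partial D_i^N/\partial p_i<0$, $\partial D_i^N/\partial p_j>0$ for $j\ne i$. (A2) Exchangeability: $D_i^N(p_1,\ldots,p_i,\ldots,p_j,\ldots,p_N)=D_j^N(p_1,\ldots,p_j,\ldots,p_i,\ldots,p_N)$ for all $i,j$ (entries $i,j$ swapped). (A3) For every $i$ and every vector of other prices there is a finite choke price at which $D_i^N=0$. Consistency recursion: for $n=N-1,\ldots,1$, $D_i^n(p_1,\ldots,p_n)=D_i^{n+1}(p_1,\ldots,p_n,\hat p_{n+1})$ for $i\le n$, where $\hat p_{n+1}(p_1,\ldots,p_n)$ is the unique price with $D^{n+1}_{n+1}(p_1,\ldots,p_n,\hat p_{n+1})=0$. (A4) $\partial D^n_i/\partial p_i<0$ for all $n\le N-1$, $i\le n$. *)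

theory Defs
  imports "HOL-Analysis.Analysis"
begin

text \<open>Price vectors are functions nat => real; a price vector of an n-firm market
  uses coordinates 1..n, all other coordinates are 0.  A demand system is a family
  D :: nat => nat => (nat => real) => real, where D n i p is the demand of firm i in
  the n-firm market at prices p.\<close>

definition orthant :: "nat \<Rightarrow> (nat \<Rightarrow> real) set" where
  "orthant n = {p. (\<forall>i. 1 \<le> i \<and> i \<le> n \<longrightarrow> 0 \<le> p i) \<and> (\<forall>i. (i = 0 \<or> n < i) \<longrightarrow> p i = 0)}"

definition partial :: "nat \<Rightarrow> ((nat \<Rightarrow> real) \<Rightarrow> real) \<Rightarrow> (nat \<Rightarrow> real) \<Rightarrow> real" where
  "partial i f p = deriv (\<lambda>t. f (p(i := t))) (p i)"

definition smooth_on_orthant :: "nat \<Rightarrow> ((nat \<Rightarrow> real) \<Rightarrow> real) \<Rightarrow> bool" where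
  "smooth_on_orthant N f \<longleftrightarrow>
     (\<forall>js. set js \<subseteq> {1..N} \<longrightarrow>
        continuous_on (orthant N) (fold partial js f) \<and>
        (\<forall>p\<in>orthant N. \<forall>i\<in>{1..N}. (\<lambda>t. fold partial js f (p(i := t))) differentiable (at (p i))))"

definition choke_price :: "(nat \<Rightarrow> nat \<Rightarrow> (nat \<Rightarrow> real) \<Rightarrow> real) \<Rightarrow> nat \<Rightarrow> (nat \<Rightarrow> real) \<Rightarrow> real" where
  "choke_price D m p = (THE q. 0 \<le> q \<and> D (Suc m) (Suc m) (p(Suc m := q)) = 0)"

definition consistent :: "(nat \<Rightarrow> nat \<Rightarrow> (nat \<Rightarrow> real) \<Rightarrow> real) \<Rightarrow> nat \<Rightarrow> bool" where
  "consistent D N \<longleftrightarrow>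
     (\<forall>m. 1 \<le> m \<and> m < N \<longrightarrow> (\<forall>p\<in>orthant m.
        (\<exists>!q. 0 \<le> q \<and> D (Suc m) (Suc m) (p(Suc m := q)) = 0) \<and>
        (\<forall>i. 1 \<le> i \<and> i \<le> m \<longrightarrow> D m i p = D (Suc m) i (p(Suc m := choke_price D m p)))))"

end

theory Submission
  imports Defs
begin

text \<open>Let \<open>c\<close> be the choke price of the entrant n+1 when the incumbents charge \<open>q\<close>, with
  \<open>q n = s n\<close>. If \<open>c \<le> s (n+1)\<close>, the entrant's demand at \<open>s (n+1)\<close> is below its demand at
  \<open>c\<close>, which is zero. Otherwise, lowering the entrant's price to \<open>s n\<close> raises its demand;
  there the two firms charge the same price, so by symmetry the entrant's demand equals
  that of firm n, and raising the entrant's price from \<open>s n\<close> up to \<open>c\<close> raises firm n's demand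
  to \<open>D n n q \<le> 0\<close>. Cross monotonicity and symmetry hold at every level because they
  are inherited along the consistency recursion; for cross monotonicity this rests on the
  choke price being increasing in the other prices.\<close>

lemma orthant_nonneg: "q \<in> orthant m \<Longrightarrow> 1 \<le> j \<Longrightarrow> j \<le> m \<Longrightarrow> 0 \<le> q j"
  unfolding orthant_def by auto

lemma orthant_upd: "q \<in> orthant m \<Longrightarrow> 1 \<le> j \<Longrightarrow> j \<le> m \<Longrightarrow> 0 \<le> t \<Longrightarrow> q(j := t) \<in> orthant m"
  unfolding orthant_def by auto

lemma orthant_extend: "q \<in> orthant m \<Longrightarrow> 0 \<le> t \<Longrightarrow> q(Suc m := t) \<in> orthant (Suc m)"
  unfolding orthant_def by auto

lemma choke_price:
  assumes "consistent D N" and "1 \<le> m" and "m < N" and "q \<in> orthant m"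
  shows choke_price_nonneg: "0 \<le> choke_price D m q"
    and demand_at_choke_price: "D (Suc m) (Suc m) (q(Suc m := choke_price D m q)) = 0"
    and demand_eq_at_choke_price:
      "\<And>i. 1 \<le> i \<Longrightarrow> i \<le> m \<Longrightarrow> D m i q = D (Suc m) i (q(Suc m := choke_price D m q))"
proof -
  note at_m = assms(1)[unfolded consistent_def, rule_format, OF conjI[OF assms(2,3)] assms(4)]
  from at_m have "0 \<le> choke_price D m q \<and> D (Suc m) (Suc m) (q(Suc m := choke_price D m q)) = 0"
    unfolding choke_price_def by (rule theI'[OF conjunct1])
  then show "0 \<le> choke_price D m q" "D (Suc m) (Suc m) (q(Suc m := choke_price D m q)) = 0"
    by auto
  show "D m i q = D (Suc m) i (q(Suc m := choke_price D m q))" if "1 \<le> i" "i \<le> m" for i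
    using at_m that by blast
qed

lemma has_real_derivative_partial:
  assumes "smooth_on_orthant N f" and "p \<in> orthant N" and "1 \<le> i" and "i \<le> N"
  shows "((\<lambda>t. f (p(i := t))) has_real_derivative partial i f p) (at (p i))"
proof -
  have "(\<lambda>t. fold partial [] f (p(i := t))) differentiable (at (p i))"
    using assms unfolding smooth_on_orthant_def by (metis atLeastAtMost_iff empty_set empty_subsetI)
  then show ?thesis
    unfolding partial_def by (simp add: DERIV_deriv_iff_real_differentiable)
qed

definition own_price_decreasing :: "(nat \<Rightarrow> nat \<Rightarrow> (nat \<Rightarrow> real) \<Rightarrow> real) \<Rightarrow> nat \<Rightarrow> bool" where
  "own_price_decreasing D m \<longleftrightarrow>
     (\<forall>i q a b. 1 \<le> i \<and> i \<le> m \<and> q \<in> orthant m \<and> 0 \<le> a \<and> a < b \<longrightarrow>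
        D m i (q(i := b)) < D m i (q(i := a)))"

definition cross_price_increasing :: "(nat \<Rightarrow> nat \<Rightarrow> (nat \<Rightarrow> real) \<Rightarrow> real) \<Rightarrow> nat \<Rightarrow> bool" where
  "cross_price_increasing D m \<longleftrightarrow>
     (\<forall>i j q t. 1 \<le> i \<and> i \<le> m \<and> 1 \<le> j \<and> j \<le> m \<and> i \<noteq> j \<and> q \<in> orthant m \<and> q j \<le> t \<longrightarrow>
        D m i q \<le> D m i (q(j := t)))"

definition symmetric_on_ties :: "(nat \<Rightarrow> nat \<Rightarrow> (nat \<Rightarrow> real) \<Rightarrow> real) \<Rightarrow> nat \<Rightarrow> bool" where
  "symmetric_on_ties D m \<longleftrightarrow>
     (\<forall>i j q. 1 \<le> i \<and> i \<le> m \<and> 1 \<le> j \<and> j \<le> m \<and> q \<in> orthant m \<and> q i = q j \<longrightarrow>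
        D m i q = D m j q)"

lemma own_price_decreasingD:
  "own_price_decreasing D m \<Longrightarrow> 1 \<le> i \<Longrightarrow> i \<le> m \<Longrightarrow> q \<in> orthant m \<Longrightarrow> 0 \<le> a \<Longrightarrow> a < b \<Longrightarrow>
     D m i (q(i := b)) < D m i (q(i := a))"
  unfolding own_price_decreasing_def by blast

lemma own_price_decreasing_le:
  "own_price_decreasing D m \<Longrightarrow> 1 \<le> i \<Longrightarrow> i \<le> m \<Longrightarrow> q \<in> orthant m \<Longrightarrow> 0 \<le> a \<Longrightarrow> a \<le> b \<Longrightarrow>
     D m i (q(i := b)) \<le> D m i (q(i := a))"
  by (metis order_le_less own_price_decreasingD)

lemma cross_price_increasingD:
  "cross_price_increasing D m \<Longrightarrow> 1 \<le> i \<Longrightarrow> i \<le> m \<Longrightarrow> 1 \<le> j \<Longrightarrow> j \<le> m \<Longrightarrow> i \<noteq> j \<Longrightarrow>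
     q \<in> orthant m \<Longrightarrow> q j \<le> t \<Longrightarrow> D m i q \<le> D m i (q(j := t))"
  unfolding cross_price_increasing_def by blast

lemma symmetric_on_tiesD:
  "symmetric_on_ties D m \<Longrightarrow> 1 \<le> i \<Longrightarrow> i \<le> m \<Longrightarrow> 1 \<le> j \<Longrightarrow> j \<le> m \<Longrightarrow> q \<in> orthant m \<Longrightarrow>
     q i = q j \<Longrightarrow> D m i q = D m j q"
  unfolding symmetric_on_ties_def by blast

lemma own_price_decreasing_if_deriv_neg:
  assumes "\<And>i q. 1 \<le> i \<Longrightarrow> i \<le> m \<Longrightarrow> q \<in> orthant m \<Longrightarrow>
             \<exists>d<0. ((\<lambda>t. D m i (q(i := t))) has_real_derivative d) (at (q i))"
  shows "own_price_decreasing D m"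
  unfolding own_price_decreasing_def
proof (intro allI impI, elim conjE)
  fix i q and a b :: real
  assume "1 \<le> i" "i \<le> m" "q \<in> orthant m" "0 \<le> a" "a < b"
  have "(\<lambda>t. D m i (q(i := t))) b < (\<lambda>t. D m i (q(i := t))) a"
  proof (rule DERIV_neg_imp_decreasing[OF \<open>a < b\<close>])
    fix x assume "a \<le> x" "x \<le> b"
    with \<open>0 \<le> a\<close> have "q(i := x) \<in> orthant m"
      using \<open>1 \<le> i\<close> \<open>i \<le> m\<close> \<open>q \<in> orthant m\<close> by (simp add: orthant_upd)
    from assms[OF \<open>1 \<le> i\<close> \<open>i \<le> m\<close> this]
    show "\<exists>y. ((\<lambda>t. D m i (q(i := t))) has_real_derivative y) (at x) \<and> y < 0"
      by auto
  qed
  then show "D m i (q(i := b)) < D m i (q(i := a))" by simp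
qed

lemma cross_price_increasing_if_partial_pos:
  assumes smooth: "\<And>i. 1 \<le> i \<Longrightarrow> i \<le> N \<Longrightarrow> smooth_on_orthant N (D N i)"
    and pos: "\<And>i j p. 1 \<le> i \<Longrightarrow> i \<le> N \<Longrightarrow> 1 \<le> j \<Longrightarrow> j \<le> N \<Longrightarrow> i \<noteq> j \<Longrightarrow>
                p \<in> orthant N \<Longrightarrow> partial j (D N i) p > 0"
  shows "cross_price_increasing D N"
  unfolding cross_price_increasing_def
proof (intro allI impI, elim conjE)
  fix i j q and t :: real
  assume ij: "1 \<le> i" "i \<le> N" "1 \<le> j" "j \<le> N" "i \<noteq> j" and q: "q \<in> orthant N" and "q j \<le> t"
  show "D N i q \<le> D N i (q(j := t))"
  proof (cases "q j = t")
    case True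
    then show ?thesis by (simp add: fun_upd_idem)
  next
    case False
    with \<open>q j \<le> t\<close> have "q j < t" by simp
    have "(\<lambda>x. D N i (q(j := x))) (q j) < (\<lambda>x. D N i (q(j := x))) t"
    proof (rule DERIV_pos_imp_increasing[OF \<open>q j < t\<close>])
      fix x assume "q j \<le> x" "x \<le> t"
      have qx: "q(j := x) \<in> orthant N"
        using orthant_upd[OF q \<open>1 \<le> j\<close> \<open>j \<le> N\<close>] orthant_nonneg[OF q \<open>1 \<le> j\<close> \<open>j \<le> N\<close>]
          \<open>q j \<le> x\<close> by simp
      have "((\<lambda>y. D N i (q(j := y))) has_real_derivative partial j (D N i) (q(j := x))) (at x)"
        using has_real_derivative_partial[OF smooth qx, of i j] ij by simp
      with pos[OF ij qx] show "\<exists>y. ((\<lambda>y. D N i (q(j := y))) has_real_derivative y) (at x) \<and> y > 0"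
        by blast
    qed
    then show ?thesis by simp
  qed
qed

lemma symmetric_on_ties_if_exchangeable:
  assumes "\<And>i j p. 1 \<le> i \<Longrightarrow> i \<le> N \<Longrightarrow> 1 \<le> j \<Longrightarrow> j \<le> N \<Longrightarrow> p \<in> orthant N \<Longrightarrow>
             D N i p = D N j (p(i := p j, j := p i))"
  shows "symmetric_on_ties D N"
  unfolding symmetric_on_ties_def
proof (intro allI impI, elim conjE)
  fix i j q
  assume "1 \<le> i" "i \<le> N" "1 \<le> j" "j \<le> N" "q \<in> orthant N" "q i = q j"
  moreover from \<open>q i = q j\<close> have "q(i := q j, j := q i) = q" by auto
  ultimately show "D N i q = D N j q" using assms[of i j q] by simp
qed

lemma choke_price_mono:
  assumes cons: "consistent D N" and "1 \<le> k" "k < N"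
    and own: "own_price_decreasing D (Suc k)" and cross: "cross_price_increasing D (Suc k)"
    and q: "q \<in> orthant k" and j: "1 \<le> j" "j \<le> k" and "q j \<le> t"
  shows "choke_price D k q \<le> choke_price D k (q(j := t))"
proof (rule ccontr)
  define c c' where "c = choke_price D k q" and "c' = choke_price D k (q(j := t))"
  assume "\<not> c \<le> c'"
  have q': "q(j := t) \<in> orthant k"
    using orthant_upd[OF q j] orthant_nonneg[OF q j] \<open>q j \<le> t\<close> by simp
  have "0 \<le> c" "0 \<le> c'"
    unfolding c_def c'_def using choke_price_nonneg[OF cons \<open>1 \<le> k\<close> \<open>k < N\<close>] q q' by auto
  have swap: "(q(Suc k := c))(j := t) = (q(j := t))(Suc k := c)"
    using j by (auto simp: fun_upd_twist)
  have "0 = D (Suc k) (Suc k) (q(Suc k := c))"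
    unfolding c_def using demand_at_choke_price[OF cons \<open>1 \<le> k\<close> \<open>k < N\<close> q] by simp
  also have "\<dots> \<le> D (Suc k) (Suc k) ((q(Suc k := c))(j := t))"
    using cross_price_increasingD[OF cross, of "Suc k" j "q(Suc k := c)" t]
      orthant_extend[OF q \<open>0 \<le> c\<close>] j \<open>q j \<le> t\<close> by simp
  also have "\<dots> = D (Suc k) (Suc k) (((q(j := t))(Suc k := c'))(Suc k := c))"
    by (simp add: swap)
  also have "\<dots> < D (Suc k) (Suc k) (((q(j := t))(Suc k := c'))(Suc k := c'))"
    using own_price_decreasingD[OF own, of "Suc k" "(q(j := t))(Suc k := c')" c' c]
      orthant_extend[OF q' \<open>0 \<le> c'\<close>] \<open>0 \<le> c'\<close> \<open>\<not> c \<le> c'\<close> by simp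
  also have "\<dots> = 0"
    unfolding c'_def using demand_at_choke_price[OF cons \<open>1 \<le> k\<close> \<open>k < N\<close> q'] by simp
  finally show False by simp
qed

lemma cross_price_increasing_inherited:
  assumes cons: "consistent D N" and "1 \<le> k" "k < N"
    and own: "own_price_decreasing D (Suc k)" and cross: "cross_price_increasing D (Suc k)"
  shows "cross_price_increasing D k"
  unfolding cross_price_increasing_def
proof (intro allI impI, elim conjE)
  fix i j q t
  assume i: "1 \<le> i" "i \<le> k" and j: "1 \<le> j" "j \<le> k" and "i \<noteq> j" and q: "q \<in> orthant k"
    and "q j \<le> t"
  define c c' where "c = choke_price D k q" and "c' = choke_price D k (q(j := t))"
  have q': "q(j := t) \<in> orthant k"
    using orthant_upd[OF q j] orthant_nonneg[OF q j] \<open>q j \<le> t\<close> by simp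
  have "0 \<le> c" "0 \<le> c'"
    unfolding c_def c'_def using choke_price_nonneg[OF cons \<open>1 \<le> k\<close> \<open>k < N\<close>] q q' by auto
  have "c \<le> c'"
    unfolding c_def c'_def by (rule choke_price_mono[OF assms q j \<open>q j \<le> t\<close>])
  have swap: "(q(Suc k := c))(j := t) = (q(j := t))(Suc k := c)"
    using j by (auto simp: fun_upd_twist)
  have "D k i q = D (Suc k) i (q(Suc k := c))"
    unfolding c_def using demand_eq_at_choke_price[OF cons \<open>1 \<le> k\<close> \<open>k < N\<close> q i] .
  also have "\<dots> \<le> D (Suc k) i ((q(Suc k := c))(j := t))"
    using cross_price_increasingD[OF cross, of i j "q(Suc k := c)" t] orthant_extend[OF q \<open>0 \<le> c\<close>]
      i j \<open>i \<noteq> j\<close> \<open>q j \<le> t\<close> by simp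
  also have "\<dots> \<le> D (Suc k) i (((q(j := t))(Suc k := c))(Suc k := c'))"
    using cross_price_increasingD[OF cross, of i "Suc k" "(q(j := t))(Suc k := c)" c']
      orthant_extend[OF q' \<open>0 \<le> c\<close>] i \<open>c \<le> c'\<close> by (simp add: swap)
  also have "\<dots> = D k i (q(j := t))"
    unfolding c'_def using demand_eq_at_choke_price[OF cons \<open>1 \<le> k\<close> \<open>k < N\<close> q' i] by simp
  finally show "D k i q \<le> D k i (q(j := t))" .
qed

lemma symmetric_on_ties_inherited:
  assumes cons: "consistent D N" and "1 \<le> k" "k < N" and sym: "symmetric_on_ties D (Suc k)"
  shows "symmetric_on_ties D k"
  unfolding symmetric_on_ties_def
proof (intro allI impI, elim conjE)
  fix i j q
  assume i: "1 \<le> i" "i \<le> k" and j: "1 \<le> j" "j \<le> k" and q: "q \<in> orthant k" and "q i = q j"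
  define c where "c = choke_price D k q"
  have "0 \<le> c" unfolding c_def using choke_price_nonneg[OF cons \<open>1 \<le> k\<close> \<open>k < N\<close> q] .
  have "D (Suc k) i (q(Suc k := c)) = D (Suc k) j (q(Suc k := c))"
    using symmetric_on_tiesD[OF sym, of i j "q(Suc k := c)"] orthant_extend[OF q \<open>0 \<le> c\<close>]
      i j \<open>q i = q j\<close> by simp
  then show "D k i q = D k j q"
    unfolding c_def using demand_eq_at_choke_price[OF cons \<open>1 \<le> k\<close> \<open>k < N\<close> q] i j by simp
qed

lemma cross_price_increasing_all_levels:
  assumes cons: "consistent D N" and "cross_price_increasing D N"
    and own: "\<And>k. 1 \<le> k \<Longrightarrow> k \<le> N \<Longrightarrow> own_price_decreasing D k"
    and "1 \<le> m" "m \<le> N"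
  shows "cross_price_increasing D m"
  using \<open>m \<le> N\<close> \<open>cross_price_increasing D N\<close>
proof (induction m rule: inc_induct)
  case (step k)
  with \<open>1 \<le> m\<close> show ?case
    using cross_price_increasing_inherited[OF cons _ _ own[of "Suc k"]] by simp
qed

lemma symmetric_on_ties_all_levels:
  assumes cons: "consistent D N" and "symmetric_on_ties D N" and "1 \<le> m" "m \<le> N"
  shows "symmetric_on_ties D m"
  using \<open>m \<le> N\<close> \<open>symmetric_on_ties D N\<close>
proof (induction m rule: inc_induct)
  case (step k)
  with \<open>1 \<le> m\<close> show ?case using symmetric_on_ties_inherited[OF cons] by simp
qed

lemma entrant_demand_nonpos:
  assumes cons: "consistent D N" and n: "1 \<le> n" "n < N"
    and own: "own_price_decreasing D (Suc n)" and cross: "cross_price_increasing D (Suc n)"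
    and sym: "symmetric_on_ties D (Suc n)"
    and q: "q \<in> orthant n" and "q n \<le> t" and "D n n q \<le> 0"
  shows "D (Suc n) (Suc n) (q(Suc n := t)) \<le> 0"
proof -
  define c where "c = choke_price D n q"
  have "0 \<le> c" unfolding c_def using choke_price_nonneg[OF cons n q] .
  have "0 \<le> q n" using orthant_nonneg[OF q] n by simp
  show ?thesis
  proof (cases "c \<le> t")
    case True
    have "D (Suc n) (Suc n) ((q(Suc n := c))(Suc n := t)) \<le> D (Suc n) (Suc n) ((q(Suc n := c))(Suc n := c))"
      by (rule own_price_decreasing_le[OF own _ _ orthant_extend[OF q \<open>0 \<le> c\<close>] \<open>0 \<le> c\<close> True]) auto
    then show ?thesis
      unfolding c_def using demand_at_choke_price[OF cons n q] by simp
  next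
    case False
    have q_tie: "q(Suc n := q n) \<in> orthant (Suc n)" using orthant_extend[OF q \<open>0 \<le> q n\<close>] .
    have "D (Suc n) (Suc n) (q(Suc n := t)) = D (Suc n) (Suc n) ((q(Suc n := q n))(Suc n := t))"
      by simp
    also have "\<dots> \<le> D (Suc n) (Suc n) ((q(Suc n := q n))(Suc n := q n))"
      by (rule own_price_decreasing_le[OF own _ _ q_tie \<open>0 \<le> q n\<close> \<open>q n \<le> t\<close>]) auto
    also have "\<dots> = D (Suc n) n (q(Suc n := q n))"
      using symmetric_on_tiesD[OF sym, of "Suc n" n "q(Suc n := q n)"] q_tie n by simp
    also have "\<dots> \<le> D (Suc n) n ((q(Suc n := q n))(Suc n := c))"
      using cross_price_increasingD[OF cross, of n "Suc n" "q(Suc n := q n)" c] q_tie n False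
        \<open>q n \<le> t\<close> by simp
    also have "\<dots> = D n n q"
      unfolding c_def using demand_eq_at_choke_price[OF cons n q, of n] n by simp
    finally show ?thesis using \<open>D n n q \<le> 0\<close> by simp
  qed
qed

theorem lemma2p1:
  fixes D :: "nat \<Rightarrow> nat \<Rightarrow> (nat \<Rightarrow> real) \<Rightarrow> real"
    and N n :: nat and s p :: "nat \<Rightarrow> real"
  assumes N2: "2 \<le> N"
    and A1_smooth: "\<forall>i. 1 \<le> i \<and> i \<le> N \<longrightarrow> smooth_on_orthant N (D N i)"
    and A1_pos: "D N N (\<lambda>_. 0) > 0"
    and A1_own: "\<forall>i. 1 \<le> i \<and> i \<le> N \<longrightarrow> (\<forall>p\<in>orthant N. partial i (D N i) p < 0)"
    and A1_cross: "\<forall>i j. 1 \<le> i \<and> i \<le> N \<and> 1 \<le> j \<and> j \<le> N \<and> j \<noteq> i \<longrightarrow>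
                     (\<forall>p\<in>orthant N. partial j (D N i) p > 0)"
    and A2: "\<forall>i j. 1 \<le> i \<and> i \<le> N \<and> 1 \<le> j \<and> j \<le> N \<longrightarrow>
                (\<forall>p\<in>orthant N. D N i p = D N j (p(i := p j, j := p i)))"
    and A3: "\<forall>i. 1 \<le> i \<and> i \<le> N \<longrightarrow> (\<forall>p\<in>orthant N. \<exists>q\<ge>0. D N i (p(i := q)) = 0)"
    and cons: "consistent D N"
    and A4: "\<forall>m i. 1 \<le> m \<and> m < N \<and> 1 \<le> i \<and> i \<le> m \<longrightarrow> (\<forall>p\<in>orthant m.
               \<exists>d<0. ((\<lambda>t. D m i (p(i := t))) has_real_derivative d) (at (p i)))"
    and s_nonneg: "0 \<le> s 1"
    and s_mono: "\<forall>i. 1 \<le> i \<and> i < N \<longrightarrow> s i \<le> s (Suc i)"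
    and n_range: "1 \<le> n" "n \<le> N - 1"
    and p_prices: "p \<in> orthant (n - 1)"
    and hyp: "D n n (p(n := s n)) \<le> 0"
  shows "D (Suc n) (Suc n) (p(n := s n, Suc n := s (Suc n))) \<le> 0"
proof -
  have n: "1 \<le> n" "n < N" using n_range N2 by auto
  have own: "own_price_decreasing D m" if "1 \<le> m" "m \<le> N" for m
  proof (rule own_price_decreasing_if_deriv_neg)
    fix i q assume "1 \<le> i" "i \<le> m" "q \<in> orthant m"
    with that A1_smooth A1_own A4 has_real_derivative_partial[of N "D N i" q i]
    show "\<exists>d<0. ((\<lambda>t. D m i (q(i := t))) has_real_derivative d) (at (q i))"
      by (cases "m = N") auto
  qed
  have "cross_price_increasing D N"
    using A1_smooth A1_cross by (intro cross_price_increasing_if_partial_pos) simp_all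
  then have "cross_price_increasing D (Suc n)"
    using cross_price_increasing_all_levels[OF cons _ own] n by simp
  moreover have "symmetric_on_ties D N"
    by (rule symmetric_on_ties_if_exchangeable, rule A2[rule_format]) auto
  then have "symmetric_on_ties D (Suc n)"
    using symmetric_on_ties_all_levels[OF cons] n by simp
  moreover have "0 \<le> s n"
    using n s_nonneg s_mono by (induction n rule: dec_induct) auto
  then have "p(n := s n) \<in> orthant n"
    using p_prices n unfolding orthant_def by auto
  moreover have "s n \<le> s (Suc n)" using s_mono n by simp
  ultimately show ?thesis
    using entrant_demand_nonpos[OF cons n own[of "Suc n"]] hyp n by simp
qed

end
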